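(* If $n$ is a product of exactly $2$ or exactly $3$ primes, not necessarily distinct (i.e., $n=pq$ or $n=pqr$ with $p,q,r$ prime), then the $n\times n$ square has no perfect Mondrian partition.
   Context: A Mondrian partition of an $n\times n$ square ($n$ a positive integer) is a dissection of the square into $k\ge 2$ non-overlapping rectangles with positive integer side lengths which are pairwise non-congruent (rectangles of dimensions $a\times b$ and $b\times a$ count as congruent). It is perfect if all its rectangles have the same area. *)

theory Defs
  imports "HOL-Computational_Algebra.Primes"
begin

text \<open>An axis-parallel rectangle with integer corners and positive integer side lengths,
  placed in the square [0,n] x [0,n], is encoded as (x, y, w, h): lower-left corner (x,y),
  width w, height h.\<close>

type_synonym rect = "nat \<times> nat \<times> nat \<times> nat"

definition rwidth :: "rect \<Rightarrow> nat" where "rwidth r = fst (snd (snd r))"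
definition rheight :: "rect \<Rightarrow> nat" where "rheight r = snd (snd (snd r))"

definition cells :: "rect \<Rightarrow> (nat \<times> nat) set" where
  "cells r = (case r of (x, y, w, h) \<Rightarrow> {x..<x+w} \<times> {y..<y+h})"

definition area :: "rect \<Rightarrow> nat" where "area r = rwidth r * rheight r"

definition congruent_rect :: "rect \<Rightarrow> rect \<Rightarrow> bool" where
  "congruent_rect r s \<longleftrightarrow>
     (rwidth r = rwidth s \<and> rheight r = rheight s) \<or>
     (rwidth r = rheight s \<and> rheight r = rwidth s)"

definition dissection :: "nat \<Rightarrow> rect set \<Rightarrow> bool" where
  "dissection n R \<longleftrightarrow> finite R \<and>
     (\<forall>r\<in>R. rwidth r > 0 \<and> rheight r > 0 \<and> cells r \<subseteq> {0..<n} \<times> {0..<n}) \<and>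
     (\<forall>c\<in>{0..<n} \<times> {0..<n}. \<exists>!r. r \<in> R \<and> c \<in> cells r)"

definition mondrian_partition :: "nat \<Rightarrow> rect set \<Rightarrow> bool" where
  "mondrian_partition n R \<longleftrightarrow> dissection n R \<and> card R \<ge> 2 \<and>
     (\<forall>r\<in>R. \<forall>s\<in>R. r \<noteq> s \<longrightarrow> \<not> congruent_rect r s)"

definition perfect_mondrian :: "nat \<Rightarrow> rect set \<Rightarrow> bool" where
  "perfect_mondrian n R \<longleftrightarrow> mondrian_partition n R \<and> (\<forall>r\<in>R. \<forall>s\<in>R. area r = area s)"

end

theory Submission
  imports Defs
begin

text \<open>In a perfect Mondrian partition of the n \<times> n square into k tiles, every tile has area
  A = n^2/k, and its shorter side a divides A and satisfies n \<le> ka and ka^2 \<le> n^2 (the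
  longer side is at most n). Non-congruent tiles of equal area have distinct shorter sides, so k
  is at most the number of such candidate divisors. When n is a product of two or three primes,
  the divisors of A pair up as a \<leftrightarrow> A/a, and counting them (or, for prime k, mapping the candidates
  injectively into the divisors of (n/k)^2 in [n/k^2, n/k]) leaves fewer than k candidates,
  except for k = 2, and for k = 3 with n = 30. Two tiles of equal area dissecting a square are
  congruent; and tiles of area 300 with short sides 10, 12, 15 cannot fill a row of the
  30 \<times> 30 square.\<close>

section \<open>Dissections\<close>

lemma finite_cells [simp]: "finite (cells r)"
  by (cases r) (auto simp: cells_def)

lemma card_cells: "card (cells r) = area r"
  by (cases r) (auto simp: cells_def area_def rwidth_def rheight_def card_cartesian_product)

lemma dissection_cells_disjoint:
  assumes "dissection n R" "r \<in> R" "s \<in> R" "r \<noteq> s"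
  shows "cells r \<inter> cells s = {}"
proof (rule ccontr)
  assume "cells r \<inter> cells s \<noteq> {}"
  then obtain c where c: "c \<in> cells r" "c \<in> cells s" by blast
  with assms have "c \<in> {0..<n} \<times> {0..<n}" unfolding dissection_def by blast
  with assms c show False unfolding dissection_def by metis
qed

lemma dissection_card_eq_sum:
  assumes "dissection n R" "X \<subseteq> {0..<n} \<times> {0..<n}"
  shows "card X = (\<Sum>r\<in>R. card (cells r \<inter> X))"
proof -
  have "X = (\<Union>r\<in>R. cells r \<inter> X)"
    using assms unfolding dissection_def by blast
  moreover have "card (\<Union>r\<in>R. cells r \<inter> X) = (\<Sum>r\<in>R. card (cells r \<inter> X))"
  proof (rule card_UN_disjoint)
    show "\<forall>r\<in>R. \<forall>s\<in>R. r \<noteq> s \<longrightarrow> cells r \<inter> X \<inter> (cells s \<inter> X) = {}"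
      using dissection_cells_disjoint[OF assms(1)] by blast
  qed (use assms(1) in \<open>auto simp: dissection_def\<close>)
  ultimately show ?thesis by simp
qed

lemma dissection_rect_bounds:
  assumes "dissection n R" "r \<in> R"
  shows "0 < rwidth r" "0 < rheight r"
    "fst r + rwidth r \<le> n" "fst (snd r) + rheight r \<le> n"
proof -
  obtain x y w h where r: "r = (x, y, w, h)" by (cases r)
  have pos: "0 < w" "0 < h" and sub: "cells r \<subseteq> {0..<n} \<times> {0..<n}"
    using assms r unfolding dissection_def by (auto simp: rwidth_def rheight_def)
  have "(x + w - 1, y + h - 1) \<in> cells r" using pos r by (auto simp: cells_def)
  with sub pos r show "0 < rwidth r" "0 < rheight r"
    "fst r + rwidth r \<le> n" "fst (snd r) + rheight r \<le> n"
    by (auto simp: rwidth_def rheight_def)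
qed

lemma dissection_rect_le:
  assumes "dissection n R" "r \<in> R"
  shows "rwidth r \<le> n" "rheight r \<le> n"
  using dissection_rect_bounds[OF assms] by auto

lemma dissection_sum_area:
  assumes "dissection n R"
  shows "(\<Sum>r\<in>R. area r) = n * n"
proof -
  have "n * n = card ({0..<n} \<times> {0..<n})" by (simp add: card_cartesian_product)
  also have "\<dots> = (\<Sum>r\<in>R. card (cells r \<inter> ({0..<n} \<times> {0..<n})))"
    by (rule dissection_card_eq_sum[OF assms]) simp
  also have "\<dots> = (\<Sum>r\<in>R. area r)"
    using assms by (intro sum.cong) (auto simp: dissection_def Int_absorb2 card_cells)
  finally show ?thesis by simp
qed

definition meets_row :: "nat \<Rightarrow> rect \<Rightarrow> bool" where
  "meets_row j r \<longleftrightarrow> fst (snd r) \<le> j \<and> j < fst (snd r) + rheight r"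

definition meets_col :: "nat \<Rightarrow> rect \<Rightarrow> bool" where
  "meets_col i r \<longleftrightarrow> fst r \<le> i \<and> i < fst r + rwidth r"

lemma dissection_row_sum:
  assumes "dissection n R" "j < n"
  shows "(\<Sum>r\<in>{r\<in>R. meets_row j r}. rwidth r) = n"
proof -
  have fin: "finite R" using assms(1) unfolding dissection_def by blast
  have row: "cells r \<inter> ({0..<n} \<times> {j}) = (if meets_row j r then {fst r..<fst r + rwidth r} \<times> {j} else {})"
    if "r \<in> R" for r
    using dissection_rect_bounds(3)[OF assms(1) that]
    by (cases r) (auto simp: cells_def meets_row_def rwidth_def rheight_def)
  have "n = card ({0..<n} \<times> {j})" by (simp add: card_cartesian_product)
  also have "\<dots> = (\<Sum>r\<in>R. card (cells r \<inter> ({0..<n} \<times> {j})))"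
    by (rule dissection_card_eq_sum[OF assms(1)]) (use assms in auto)
  also have "\<dots> = (\<Sum>r\<in>R. if meets_row j r then rwidth r else 0)"
    by (intro sum.cong) (simp_all add: row card_cartesian_product)
  finally show ?thesis by (simp add: sum.inter_filter[OF fin])
qed

lemma dissection_col_sum:
  assumes "dissection n R" "i < n"
  shows "(\<Sum>r\<in>{r\<in>R. meets_col i r}. rheight r) = n"
proof -
  have fin: "finite R" using assms(1) unfolding dissection_def by blast
  have col: "cells r \<inter> ({i} \<times> {0..<n}) = (if meets_col i r then {i} \<times> {fst (snd r)..<fst (snd r) + rheight r} else {})"
    if "r \<in> R" for r
    using dissection_rect_bounds(4)[OF assms(1) that]
    by (cases r) (auto simp: cells_def meets_col_def rwidth_def rheight_def)
  have "n = card ({i} \<times> {0..<n})" by (simp add: card_cartesian_product)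
  also have "\<dots> = (\<Sum>r\<in>R. card (cells r \<inter> ({i} \<times> {0..<n})))"
    by (rule dissection_card_eq_sum[OF assms(1)]) (use assms in auto)
  also have "\<dots> = (\<Sum>r\<in>R. if meets_col i r then rheight r else 0)"
    by (intro sum.cong) (simp_all add: col card_cartesian_product)
  finally show ?thesis by (simp add: sum.inter_filter[OF fin])
qed

lemma dissection_meets_own_row:
  assumes "dissection n R" "r \<in> R"
  shows "meets_row (fst (snd r)) r" "fst (snd r) < n"
  using dissection_rect_bounds[OF assms] by (auto simp: meets_row_def)

lemma dissection_meets_own_col:
  assumes "dissection n R" "r \<in> R"
  shows "meets_col (fst r) r" "fst r < n"
  using dissection_rect_bounds[OF assms] by (auto simp: meets_col_def)

lemma two_tiles_dims_eq:
  fixes w1 h1 w2 h2 n :: nat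
  assumes "w1 = n \<or> w1 + w2 = n" "w2 = n \<or> w1 + w2 = n"
    and "h1 = n \<or> h1 + h2 = n" "h2 = n \<or> h1 + h2 = n"
    and area: "w1 * h1 = w2 * h2" "w1 * h1 + w2 * h2 = n * n"
    and pos: "0 < w1" "0 < h1" "0 < w2" "0 < h2"
  shows "w1 = w2 \<and> h1 = h2"
proof -
  have "\<not> (w1 + w2 = n \<and> h1 + h2 = n)"
  proof
    assume "w1 + w2 = n \<and> h1 + h2 = n"
    then have "n * n = (w1 + w2) * (h1 + h2)" by simp
    also have "\<dots> = w1 * h1 + w2 * h2 + (w1 * h2 + w2 * h1)" by (simp add: algebra_simps)
    finally have "n * n = w1 * h1 + w2 * h2 + (w1 * h2 + w2 * h1)" .
    with area pos show False by simp
  qed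
  then consider "w1 = n" "w2 = n" | "h1 = n" "h2 = n"
    using assms(1-4) pos by fastforce
  then show ?thesis
    using area(1) pos by cases simp_all
qed

lemma dissection_two_equal_area_congruent:
  assumes D: "dissection n {r1, r2}" and ne: "r1 \<noteq> r2" and A: "area r1 = area r2"
  shows "congruent_rect r1 r2"
proof -
  have in_R: "r1 \<in> {r1, r2}" "r2 \<in> {r1, r2}" by simp_all
  have row: "rwidth r = n \<or> rwidth r1 + rwidth r2 = n" if r: "r \<in> {r1, r2}" for r
  proof -
    have "(\<Sum>s\<in>{s\<in>{r1, r2}. meets_row (fst (snd r)) s}. rwidth s) = n"
      using dissection_row_sum[OF D dissection_meets_own_row(2)[OF D r]] .
    moreover have "{s\<in>{r1, r2}. meets_row (fst (snd r)) s} \<in> {{r}, {r1, r2}}"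
      using dissection_meets_own_row(1)[OF D r] r by auto
    ultimately show ?thesis using ne by auto
  qed
  have col: "rheight r = n \<or> rheight r1 + rheight r2 = n" if r: "r \<in> {r1, r2}" for r
  proof -
    have "(\<Sum>s\<in>{s\<in>{r1, r2}. meets_col (fst r) s}. rheight s) = n"
      using dissection_col_sum[OF D dissection_meets_own_col(2)[OF D r]] .
    moreover have "{s\<in>{r1, r2}. meets_col (fst r) s} \<in> {{r}, {r1, r2}}"
      using dissection_meets_own_col(1)[OF D r] r by auto
    ultimately show ?thesis using ne by auto
  qed
  have "area r1 + area r2 = n * n"
    using dissection_sum_area[OF D] ne by simp
  then have "rwidth r1 = rwidth r2 \<and> rheight r1 = rheight r2"
    using row[OF in_R(1)] row[OF in_R(2)] col[OF in_R(1)] col[OF in_R(2)] A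
      dissection_rect_bounds(1,2)[OF D in_R(1)] dissection_rect_bounds(1,2)[OF D in_R(2)]
    by (intro two_tiles_dims_eq) (auto simp: area_def)
  then show ?thesis unfolding congruent_rect_def by blast
qed

section \<open>Short sides of the tiles\<close>

definition short_side :: "rect \<Rightarrow> nat" where
  "short_side r = min (rwidth r) (rheight r)"

lemma short_side_times_long_side: "short_side r * max (rwidth r) (rheight r) = area r"
  by (simp add: short_side_def area_def min_def max_def mult.commute)

lemma rwidth_cases_short_side:
  assumes "0 < short_side r"
  shows "rwidth r = short_side r \<or> rwidth r = area r div short_side r"
proof (cases "rwidth r \<le> rheight r")
  case False
  then show ?thesis using assms by (simp add: short_side_def area_def)
qed (simp add: short_side_def)

lemma congruent_rect_if_short_side_eq:
  assumes "area r = area s" "0 < short_side r" "short_side r = short_side s"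
  shows "congruent_rect r s"
  using assms by (auto simp: congruent_rect_def short_side_def area_def min_def split: if_splits)

definition short_side_candidates :: "nat \<Rightarrow> nat \<Rightarrow> nat \<Rightarrow> nat set" where
  "short_side_candidates n k A = {a. a dvd A \<and> n \<le> k * a \<and> k * a * a \<le> n * n}"

lemma finite_short_side_candidates: "0 < A \<Longrightarrow> finite (short_side_candidates n k A)"
  by (rule finite_subset[of _ "{d. d dvd A}"]) (auto simp: short_side_candidates_def)

lemma short_side_in_candidates:
  assumes D: "dissection n R" and r: "r \<in> R" and k: "k * area r = n * n"
  shows "short_side r \<in> short_side_candidates n k (area r)"
proof -
  define a where "a = short_side r"
  define b where "b = max (rwidth r) (rheight r)"
  have ab: "a * b = area r" unfolding a_def b_def by (rule short_side_times_long_side)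
  have "b \<le> n" using dissection_rect_le[OF D r] unfolding b_def by simp
  have "a \<le> b" unfolding a_def b_def short_side_def by simp
  have "n * n = (k * a) * b" using k ab by (simp add: mult.assoc)
  also have "\<dots> \<le> (k * a) * n" using \<open>b \<le> n\<close> by (rule mult_le_mono2)
  finally have "n \<le> k * a" by (cases "n = 0") auto
  moreover have "k * a * a \<le> k * a * b" using \<open>a \<le> b\<close> by (rule mult_le_mono2)
  then have "k * a * a \<le> n * n" using k ab by (simp add: mult.assoc)
  moreover have "a dvd area r" using ab by (metis dvd_triv_left)
  ultimately show ?thesis unfolding short_side_candidates_def a_def by simp
qed

lemma perfect_mondrian_short_sides:
  assumes "perfect_mondrian n R"
  obtains A where "card R * A = n * n" "\<forall>r\<in>R. area r = A"
    "inj_on short_side R" "short_side ` R \<subseteq> short_side_candidates n (card R) A"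
proof -
  have D: "dissection n R" and two: "2 \<le> card R"
    and noncongr: "\<forall>r\<in>R. \<forall>s\<in>R. r \<noteq> s \<longrightarrow> \<not> congruent_rect r s"
    and same_area: "\<forall>r\<in>R. \<forall>s\<in>R. area r = area s"
    using assms unfolding perfect_mondrian_def mondrian_partition_def by blast+
  have "R \<noteq> {}" using two by auto
  then obtain r0 where r0: "r0 \<in> R" by blast
  define A where "A = area r0"
  have area_R: "\<forall>r\<in>R. area r = A" using same_area r0 unfolding A_def by blast
  have total: "card R * A = n * n" using dissection_sum_area[OF D] area_R by simp
  have "inj_on short_side R"
  proof (rule inj_onI)
    fix r s assume rs: "r \<in> R" "s \<in> R" "short_side r = short_side s"
    have "0 < short_side r"
      using dissection_rect_bounds(1,2)[OF D rs(1)] by (simp add: short_side_def)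
    then have "congruent_rect r s"
      using area_R rs by (intro congruent_rect_if_short_side_eq) auto
    then show "r = s" using noncongr rs by blast
  qed
  moreover have "short_side ` R \<subseteq> short_side_candidates n (card R) A"
    using short_side_in_candidates[OF D] area_R total by auto
  ultimately show ?thesis using that total area_R by blast
qed

lemma no_dissection_30_short_sides_10_12_15:
  assumes D: "dissection 30 R" and area_R: "\<forall>r\<in>R. area r = 300"
    and inj: "inj_on short_side R" and short: "short_side ` R = {10, 12, 15}"
  shows False
proof -
  obtain r1 where r1: "r1 \<in> R" "short_side r1 = 10"
    using short by (metis imageE insertI1)
  obtain r2 where r2: "r2 \<in> R" "short_side r2 = 15"
    using short by (metis imageE insertI1 insertI2)
  obtain r3 where r3: "r3 \<in> R" "short_side r3 = 12"
    using short by (metis imageE insertI1 insertI2)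
  note r = r1(1) r2(1) r3(1) and s = r1(2) r2(2) r3(2)
  have R: "R = {r1, r2, r3}"
  proof
    show "R \<subseteq> {r1, r2, r3}"
    proof
      fix r assume "r \<in> R"
      then have "short_side r \<in> {10, 12, 15}" using short by blast
      then have "short_side r = short_side r1 \<or> short_side r = short_side r2
          \<or> short_side r = short_side r3"
        using s by auto
      then show "r \<in> {r1, r2, r3}"
        using inj_onD[OF inj _ \<open>r \<in> R\<close>] r by blast
    qed
  qed (use r in simp)
  have ne: "r1 \<noteq> r2" "r1 \<noteq> r3" "r2 \<noteq> r3" using s by auto
  define j where "j = fst (snd r3)"
  have "(\<Sum>r\<in>{r\<in>R. meets_row j r}. rwidth r) = 30"
    unfolding j_def by (rule dissection_row_sum[OF D dissection_meets_own_row(2)[OF D r(3)]])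
  then have "(\<Sum>r\<in>{r1, r2, r3}. if meets_row j r then rwidth r else 0) = 30"
    by (simp only: sum.inter_filter R finite.emptyI finite.insertI)
  then have "rwidth r3 + (if meets_row j r1 then rwidth r1 else 0)
      + (if meets_row j r2 then rwidth r2 else 0) = 30"
    using dissection_meets_own_row(1)[OF D r(3)] ne unfolding j_def by simp
  moreover have "rwidth r1 = 10 \<or> rwidth r1 = 30"
    using rwidth_cases_short_side[of r1] area_R r(1) s(1) by simp
  moreover have "rwidth r2 = 15 \<or> rwidth r2 = 20"
    using rwidth_cases_short_side[of r2] area_R r(2) s(2) by simp
  moreover have "rwidth r3 = 12 \<or> rwidth r3 = 25"
    using rwidth_cases_short_side[of r3] area_R r(3) s(3) by simp
  ultimately show False by (auto split: if_splits)
qed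

section \<open>Counting divisors\<close>

lemma mult_self_le_mult_self_iff_nat: "(a::nat) * a \<le> b * b \<longleftrightarrow> a \<le> b"
  by (metis power2_eq_square power2_le_imp_le zero_le power_mono)

lemma mult_self_eq_mult_self_iff_nat: "(a::nat) * a = b * b \<longleftrightarrow> a = b"
  by (metis mult_self_le_mult_self_iff_nat order_antisym order_refl)

lemma card_le_length_if_subset_set: "A \<subseteq> set xs \<Longrightarrow> card A \<le> length xs"
  by (rule le_trans[OF card_mono[OF finite_set] card_length])

lemma card_divisors_mult_le:
  assumes "0 < (x::nat)" "0 < y"
  shows "card {d. d dvd x * y} \<le> card {d. d dvd x} * card {d. d dvd y}"
proof -
  have "{d. d dvd x * y} \<subseteq> (\<lambda>(a, b). a * b) ` ({d. d dvd x} \<times> {d. d dvd y})"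
    by (auto dest!: division_decomp)
  then have "card {d. d dvd x * y} \<le> card ((\<lambda>(a, b). a * b) ` ({d. d dvd x} \<times> {d. d dvd y}))"
    using assms by (intro card_mono) auto
  also have "\<dots> \<le> card ({d. d dvd x} \<times> {d. d dvd y})"
    using assms by (intro card_image_le) auto
  finally show ?thesis by (simp add: card_cartesian_product)
qed

lemma card_divisors_prime_power:
  assumes "prime (p::nat)"
  shows "card {d. d dvd p ^ e} = e + 1"
proof -
  have "{d. d dvd p ^ e} = (\<lambda>i. p ^ i) ` {..e}"
    using divides_primepow_nat[OF assms] by auto
  moreover have "inj_on (\<lambda>i. p ^ i) {..e}"
    using prime_gt_1_nat[OF assms] by (auto intro: inj_onI simp: power_inject_exp)
  ultimately show ?thesis by (simp add: card_image)
qed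

lemma card_small_divisors_le_card_large_divisors:
  assumes "0 < (A::nat)"
  shows "card {a. a dvd A \<and> a * a \<le> A} \<le> card {a. a dvd A \<and> A \<le> a * a}"
proof (rule card_inj_on_le[where f = "\<lambda>a. A div a"])
  show "inj_on (\<lambda>a. A div a) {a. a dvd A \<and> a * a \<le> A}"
  proof (rule inj_onI)
    fix a b assume ab: "a \<in> {a. a dvd A \<and> a * a \<le> A}" "b \<in> {a. a dvd A \<and> a * a \<le> A}"
      "A div a = A div b"
    have "a * (A div a) = b * (A div a)"
      using ab dvd_mult_div_cancel[of a A] dvd_mult_div_cancel[of b A] by simp
    moreover have "A div a \<noteq> 0" using ab(1) assms by (simp add: dvd_div_eq_0_iff)
    ultimately show "a = b" by simp
  qed
  show "(\<lambda>a. A div a) ` {a. a dvd A \<and> a * a \<le> A} \<subseteq> {a. a dvd A \<and> A \<le> a * a}"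
  proof
    fix b assume "b \<in> (\<lambda>a. A div a) ` {a. a dvd A \<and> a * a \<le> A}"
    then obtain a c where a: "A = a * c" "a * a \<le> A" "b = c"
      using assms by (auto elim!: dvdE)
    then have "0 < a" using assms by (cases a) auto
    with a have "a \<le> c" by simp
    then show "b \<in> {a. a dvd A \<and> A \<le> a * a}" using a by (simp add: mult.commute)
  qed
  show "finite {a. a dvd A \<and> A \<le> a * a}"
    by (rule finite_subset[OF _ finite_divisors_nat[OF assms]]) blast
qed

lemma finite_square_roots_nat: "finite {a::nat. a * a = A}"
proof -
  have "{a. a * a = A} \<subseteq> {..A}"
    using le_square by auto
  then show ?thesis by (rule finite_subset) simp
qed

lemma card_square_roots_nat: "card {a::nat. a * a = A} \<le> 1"
proof -
  have "card {a. a * a = A} \<le> Suc 0"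
  proof (subst card_le_Suc0_iff_eq[OF finite_square_roots_nat], intro ballI)
    fix a b assume "a \<in> {a. a * a = A}" "b \<in> {a. a * a = A}"
    then have "a * a = b * b" by simp
    then show "a = b" by (simp only: mult_self_eq_mult_self_iff_nat)
  qed
  then show ?thesis by simp
qed

lemma card_small_divisors:
  assumes "0 < (A::nat)"
  shows "2 * card {a. a dvd A \<and> a * a \<le> A} \<le> card {a. a dvd A} + 1"
proof -
  define L where "L = {a. a dvd A \<and> a * a \<le> A}"
  define H where "H = {a. a dvd A \<and> A \<le> a * a}"
  have fin: "finite L" "finite H"
    unfolding L_def H_def by (rule finite_subset[OF _ finite_divisors_nat[OF assms]], blast)+
  have "L \<inter> H \<subseteq> {a. a * a = A}" unfolding L_def H_def by auto
  then have "card (L \<inter> H) \<le> 1"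
    using card_mono[OF finite_square_roots_nat] card_square_roots_nat le_trans by blast
  moreover have "L \<union> H = {a. a dvd A}" unfolding L_def H_def by auto
  then have "card L + card H = card {a. a dvd A} + card (L \<inter> H)"
    using card_Un_Int[OF fin] by simp
  moreover have "card L \<le> card H"
    unfolding L_def H_def by (rule card_small_divisors_le_card_large_divisors[OF assms])
  ultimately show ?thesis unfolding L_def by linarith
qed

section \<open>Composite numbers of tiles\<close>

lemma short_side_candidates_subset_small_divisors:
  assumes "k * A = n * n" "0 < k"
  shows "short_side_candidates n k A \<subseteq> {a. a dvd A \<and> a * a \<le> A}"
proof
  fix a assume "a \<in> short_side_candidates n k A"
  then have a: "a dvd A" "k * (a * a) \<le> k * A"
    using assms(1) by (simp_all add: short_side_candidates_def mult.assoc)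
  then show "a \<in> {a. a dvd A \<and> a * a \<le> A}" using assms(2) by simp
qed

lemma card_short_side_candidates_le:
  assumes "k * A = n * n" "0 < k" "0 < A"
  shows "2 * card (short_side_candidates n k A) \<le> card {a. a dvd A} + 1"
proof -
  have "card (short_side_candidates n k A) \<le> card {a. a dvd A \<and> a * a \<le> A}"
    using assms by (intro card_mono short_side_candidates_subset_small_divisors) auto
  then show ?thesis using card_small_divisors[OF assms(3)] by linarith
qed

lemma card_short_side_candidates_le_strict:
  assumes "k * A = n * n" "0 < k" "0 < A" "k < n"
  shows "2 * card (short_side_candidates n k A) + 1 \<le> card {a. a dvd A}"
proof -
  define L where "L = {a. a dvd A \<and> a * a \<le> A}"
  have fin: "finite L" unfolding L_def using assms(3) by simp
  have "1 \<notin> short_side_candidates n k A"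
    using assms(4) by (simp add: short_side_candidates_def)
  then have "short_side_candidates n k A \<subseteq> L - {1}"
    using short_side_candidates_subset_small_divisors[OF assms(1,2)] unfolding L_def by blast
  then have "card (short_side_candidates n k A) \<le> card (L - {1})"
    using fin by (intro card_mono) auto
  moreover have "1 \<in> L" using assms(3) unfolding L_def by simp
  then have "card (L - {1}) < card L" using fin by (rule card_Diff1_less[rotated])
  ultimately show ?thesis using card_small_divisors[OF assms(3)] unfolding L_def by linarith
qed

lemma card_divisors_two_prime_powers_le:
  assumes "prime (p::nat)" "prime q"
  shows "card {d. d dvd p ^ a * q ^ b} \<le> (a + 1) * (b + 1)"
  using card_divisors_mult_le[of "p ^ a" "q ^ b"] assms
  by (simp add: card_divisors_prime_power prime_gt_0_nat)

lemma card_divisors_three_prime_powers_le: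
  assumes "prime (p::nat)" "prime q" "prime r"
  shows "card {d. d dvd p ^ a * q ^ b * r ^ c} \<le> (a + 1) * (b + 1) * (c + 1)"
proof -
  have "card {d. d dvd p ^ a * q ^ b * r ^ c} \<le> card {d. d dvd p ^ a * q ^ b} * (c + 1)"
    using card_divisors_mult_le[of "p ^ a * q ^ b" "r ^ c"] assms
    by (simp add: card_divisors_prime_power prime_gt_0_nat)
  also have "\<dots> \<le> (a + 1) * (b + 1) * (c + 1)"
    using card_divisors_two_prime_powers_le[OF assms(1,2)] by (rule mult_le_mono1)
  finally show ?thesis .
qed

lemma prime_power_cofactor:
  assumes "(p::nat) > 0" "e \<le> 2"
  shows "p ^ e * p ^ (2 - e) = p * p"
  using assms by (simp flip: power_add add: power2_eq_square)

lemma factor_square_of_two_primes: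
  assumes "prime (p::nat)" "prime q" "k * A = (p * q) * (p * q)"
  obtains \<alpha> \<beta> where "\<alpha> \<le> 2" "\<beta> \<le> 2" "k = p ^ \<alpha> * q ^ \<beta>" "A = p ^ (2 - \<alpha>) * q ^ (2 - \<beta>)"
proof -
  have pq: "0 < p" "0 < q" using assms prime_gt_0_nat by auto
  have "k dvd p ^ 2 * q ^ 2"
    using assms(3) by (metis dvd_triv_left power2_eq_square mult.commute mult.left_commute)
  then obtain k1 k2 where "k = k1 * k2" "k1 dvd p ^ 2" "k2 dvd q ^ 2"
    using division_decomp by blast
  then obtain \<alpha> \<beta> where ab: "\<alpha> \<le> 2" "\<beta> \<le> 2" and k: "k = p ^ \<alpha> * q ^ \<beta>"
    using divides_primepow_nat[OF assms(1)] divides_primepow_nat[OF assms(2)] by metis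
  have "k * (p ^ (2 - \<alpha>) * q ^ (2 - \<beta>)) = (p ^ \<alpha> * p ^ (2 - \<alpha>)) * (q ^ \<beta> * q ^ (2 - \<beta>))"
    unfolding k by (simp add: algebra_simps)
  also have "\<dots> = k * A"
    using assms(3) ab pq by (simp add: prime_power_cofactor algebra_simps)
  finally have "A = p ^ (2 - \<alpha>) * q ^ (2 - \<beta>)"
    using k pq by simp
  with ab k that show ?thesis by blast
qed

lemma factor_square_of_three_primes:
  assumes "prime (p::nat)" "prime q" "prime r" "k * A = (p * q * r) * (p * q * r)"
  obtains \<alpha> \<beta> \<gamma> where "\<alpha> \<le> 2" "\<beta> \<le> 2" "\<gamma> \<le> 2" "k = p ^ \<alpha> * q ^ \<beta> * r ^ \<gamma>"
    "A = p ^ (2 - \<alpha>) * q ^ (2 - \<beta>) * r ^ (2 - \<gamma>)"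
proof -
  have pqr: "0 < p" "0 < q" "0 < r" using assms prime_gt_0_nat by auto
  have "k dvd p ^ 2 * (q ^ 2 * r ^ 2)"
    using assms(4) by (metis dvd_triv_left power2_eq_square mult.commute mult.left_commute)
  then obtain k1 k2 k3 where "k = k1 * (k2 * k3)" "k1 dvd p ^ 2" "k2 dvd q ^ 2" "k3 dvd r ^ 2"
    using division_decomp by metis
  then obtain \<alpha> \<beta> \<gamma> where abc: "\<alpha> \<le> 2" "\<beta> \<le> 2" "\<gamma> \<le> 2" and k: "k = p ^ \<alpha> * q ^ \<beta> * r ^ \<gamma>"
    using divides_primepow_nat[OF assms(1)] divides_primepow_nat[OF assms(2)]
      divides_primepow_nat[OF assms(3)] by (metis mult.assoc)
  have "k * (p ^ (2 - \<alpha>) * q ^ (2 - \<beta>) * r ^ (2 - \<gamma>))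
      = (p ^ \<alpha> * p ^ (2 - \<alpha>)) * (q ^ \<beta> * q ^ (2 - \<beta>)) * (r ^ \<gamma> * r ^ (2 - \<gamma>))"
    unfolding k by (simp add: algebra_simps)
  also have "\<dots> = k * A"
    using assms(4) abc pqr by (simp add: prime_power_cofactor algebra_simps)
  finally have "A = p ^ (2 - \<alpha>) * q ^ (2 - \<beta>) * r ^ (2 - \<gamma>)"
    using k pqr by simp
  with abc k that show ?thesis by blast
qed

lemma card_short_side_candidates_composite_two_primes:
  assumes pq: "prime (p::nat)" "prime q" and n: "n = p * q"
    and kA: "k * A = n * n" and k: "2 \<le> k" "\<not> prime k"
  shows "card (short_side_candidates n k A) < k"
proof -
  obtain \<alpha> \<beta> where ab: "\<alpha> \<le> 2" "\<beta> \<le> 2"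
    and k_eq: "k = p ^ \<alpha> * q ^ \<beta>" and A: "A = p ^ (2 - \<alpha>) * q ^ (2 - \<beta>)"
    using factor_square_of_two_primes[OF pq kA[unfolded n]] .
  have "2 \<le> \<alpha> + \<beta>"
  proof (rule ccontr)
    assume "\<not> 2 \<le> \<alpha> + \<beta>"
    then have "(\<alpha> = 0 \<and> \<beta> = 0) \<or> (\<alpha> = 1 \<and> \<beta> = 0) \<or> (\<alpha> = 0 \<and> \<beta> = 1)" by auto
    then have "k = 1 \<or> k = p \<or> k = q" using k_eq by auto
    with k pq show False by auto
  qed
  moreover have "\<alpha> \<in> {0, 1, 2}" "\<beta> \<in> {0, 1, 2}" using ab by auto
  ultimately have "(3 - \<alpha>) * (3 - \<beta>) \<le> 4" by auto
  moreover have "card {d. d dvd A} \<le> (3 - \<alpha>) * (3 - \<beta>)"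
  proof -
    have e: "2 - \<alpha> + 1 = 3 - \<alpha>" "2 - \<beta> + 1 = 3 - \<beta>" using ab by auto
    show ?thesis
      using card_divisors_two_prime_powers_le[OF pq, of "2 - \<alpha>" "2 - \<beta>"]
      unfolding A e .
  qed
  moreover have "2 * card (short_side_candidates n k A) \<le> card {d. d dvd A} + 1"
    using kA k A pq by (intro card_short_side_candidates_le) (auto simp: prime_gt_0_nat)
  moreover have "4 \<le> k"
    using k by (cases "k = 2 \<or> k = 3") auto
  ultimately show ?thesis by linarith
qed

lemma card_short_side_candidates_composite_three_primes:
  assumes pqr: "prime (p::nat)" "prime q" "prime r" and n: "n = p * q * r"
    and kA: "k * A = n * n" and k: "2 \<le> k" "\<not> prime k" "k \<noteq> 4"
  shows "card (short_side_candidates n k A) < k"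
proof -
  obtain \<alpha> \<beta> \<gamma> where abc: "\<alpha> \<le> 2" "\<beta> \<le> 2" "\<gamma> \<le> 2"
    and k_eq: "k = p ^ \<alpha> * q ^ \<beta> * r ^ \<gamma>" and A: "A = p ^ (2 - \<alpha>) * q ^ (2 - \<beta>) * r ^ (2 - \<gamma>)"
    using factor_square_of_three_primes[OF pqr kA[unfolded n]] .
  have A0: "0 < A" using A pqr by (simp add: prime_gt_0_nat)
  have "2 \<le> \<alpha> + \<beta> + \<gamma>"
  proof (rule ccontr)
    assume "\<not> 2 \<le> \<alpha> + \<beta> + \<gamma>"
    then have "(\<alpha> = 0 \<and> \<beta> = 0 \<and> \<gamma> = 0) \<or> (\<alpha> = 1 \<and> \<beta> = 0 \<and> \<gamma> = 0)
        \<or> (\<alpha> = 0 \<and> \<beta> = 1 \<and> \<gamma> = 0) \<or> (\<alpha> = 0 \<and> \<beta> = 0 \<and> \<gamma> = 1)" by auto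
    then have "k = 1 \<or> k = p \<or> k = q \<or> k = r" using k_eq by auto
    with k pqr show False by auto
  qed
  moreover have "\<alpha> \<in> {0, 1, 2}" "\<beta> \<in> {0, 1, 2}" "\<gamma> \<in> {0, 1, 2}" using abc by auto
  ultimately have "(3 - \<alpha>) * (3 - \<beta>) * (3 - \<gamma>) \<le> 12" by auto
  moreover have "card {d. d dvd A} \<le> (3 - \<alpha>) * (3 - \<beta>) * (3 - \<gamma>)"
  proof -
    have e: "2 - \<alpha> + 1 = 3 - \<alpha>" "2 - \<beta> + 1 = 3 - \<beta>" "2 - \<gamma> + 1 = 3 - \<gamma>"
      using abc by auto
    show ?thesis
      using card_divisors_three_prime_powers_le[OF pqr, of "2 - \<alpha>" "2 - \<beta>" "2 - \<gamma>"]
      unfolding A e .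
  qed
  moreover have "6 \<le> k"
    using k by (cases "k = 2 \<or> k = 3 \<or> k = 5") auto
  moreover have "8 \<le> n"
  proof -
    have "2 * 2 * 2 \<le> p * q * r" using pqr prime_ge_2_nat by (intro mult_le_mono) auto
    then show ?thesis unfolding n by simp
  qed
  moreover have "2 * card (short_side_candidates n k A) + 1 \<le> card {d. d dvd A}" if "k < n"
    using kA k A0 that by (intro card_short_side_candidates_le_strict) auto
  moreover have "2 * card (short_side_candidates n k A) \<le> card {d. d dvd A} + 1"
    using kA k A0 by (intro card_short_side_candidates_le) auto
  ultimately show ?thesis by (cases "k < n") linarith+
qed

section \<open>Prime numbers of tiles\<close>

definition sq_divisor_window :: "nat \<Rightarrow> nat \<Rightarrow> nat set" where
  "sq_divisor_window l s = {d. d dvd s * s \<and> s \<le> l * d \<and> d \<le> s}"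

lemma finite_sq_divisor_window: "finite (sq_divisor_window l s)"
  by (rule finite_subset[of _ "{..s}"]) (auto simp: sq_divisor_window_def)

lemma prime_mult_square_ne_square:
  assumes "prime (l::nat)" "0 < s"
  shows "l * d * d \<noteq> s * s"
proof
  assume e: "l * d * d = s * s"
  then have "d \<noteq> 0" using assms(2) by (cases d) auto
  then have "multiplicity l (l * (d * d)) = 1 + 2 * multiplicity l d"
    using assms(1) by (simp add: prime_elem_multiplicity_mult_distrib)
  moreover have "multiplicity l (s * s) = 2 * multiplicity l s"
    using assms by (simp add: prime_elem_multiplicity_mult_distrib)
  ultimately show False using e by (simp add: mult.assoc) presburger
qed

lemma short_side_candidates_prime_bounds:
  assumes "0 < l" "a \<in> short_side_candidates (l * s) l (l * s * s)"
  shows "a dvd l * (s * s)" "s \<le> a" "a * a \<le> l * (s * s)"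
proof -
  have a: "a dvd l * s * s" "l * s \<le> l * a" "l * (a * a) \<le> l * (l * (s * s))"
    using assms(2) by (simp_all add: short_side_candidates_def algebra_simps)
  then show "a dvd l * (s * s)" by (simp add: mult.assoc)
  show "s \<le> a" "a * a \<le> l * (s * s)" using a(2,3) assms(1) by simp_all
qed

lemma cofactor_in_sq_divisor_window:
  assumes l: "0 < l" and s: "0 < s" and a: "a \<in> short_side_candidates (l * s) l (l * s * s)"
    and "a dvd s * s"
  shows "s * s div a \<in> sq_divisor_window l s" "s * s \<le> l * (s * s div a) * (s * s div a)"
proof -
  obtain d where d: "s * s = a * d" using \<open>a dvd s * s\<close> by (auto elim: dvdE)
  have b: "s \<le> a" "a * a \<le> l * (s * s)"
    using short_side_candidates_prime_bounds[OF l a] by simp_all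
  then have "0 < a" using s by simp
  then have q: "s * s div a = d" using d by simp
  have "(s * s) * (s * s) \<le> (s * s) * (l * d * d)"
    using mult_le_mono1[OF b(2), of "d * d"] d by (simp add: algebra_simps)
  then show "s * s \<le> l * (s * s div a) * (s * s div a)" using s q by simp
  have "s * d \<le> s * s" using d mult_le_mono1[OF b(1), of d] by simp
  then have "d \<le> s" using s by simp
  moreover have "a * s \<le> a * (l * d)"
  proof -
    have "a * s \<le> a * a" using b(1) by simp
    also have "\<dots> \<le> l * (s * s)" by (rule b(2))
    also have "\<dots> = a * (l * d)" using d by (simp add: algebra_simps)
    finally show ?thesis .
  qed
  then have "s \<le> l * d" using \<open>0 < a\<close> by simp
  ultimately show "s * s div a \<in> sq_divisor_window l s"
    unfolding q sq_divisor_window_def using d by simp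
qed

lemma quotient_in_sq_divisor_window:
  assumes l: "prime l" and a: "a \<in> short_side_candidates (l * s) l (l * s * s)"
    and "\<not> a dvd s * s"
  shows "a = l * (a div l)" "a div l \<in> sq_divisor_window l s" "l * (a div l) * (a div l) \<le> s * s"
proof -
  have l0: "0 < l" using l prime_gt_0_nat by blast
  have b: "a dvd l * (s * s)" "s \<le> a" "a * a \<le> l * (s * s)"
    using short_side_candidates_prime_bounds[OF l0 a] by simp_all
  have "l dvd a"
  proof (rule ccontr)
    assume "\<not> l dvd a"
    then have "coprime l a" using l prime_imp_coprime by blast
    then have "coprime a l" by (simp add: coprime_commute)
    then show False using b(1) \<open>\<not> a dvd s * s\<close> coprime_dvd_mult_right_iff by blast
  qed
  then obtain d where d: "a = l * d" by (auto elim: dvdE)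
  then show "a = l * (a div l)" using l0 by simp
  have q: "a div l = d" using d l0 by simp
  have "l * (l * d * d) \<le> l * (s * s)" using b(3) d by (simp add: algebra_simps)
  then have "l * d * d \<le> s * s" using l0 by simp
  then show "l * (a div l) * (a div l) \<le> s * s" unfolding q .
  moreover have "d * d \<le> l * d * d" using l0 by simp
  ultimately have "d * d \<le> s * s" unfolding q by linarith
  then have "d \<le> s" by (simp add: mult_self_le_mult_self_iff_nat)
  moreover have "d dvd s * s" using b(1) d l0 by simp
  ultimately show "a div l \<in> sq_divisor_window l s"
    unfolding q sq_divisor_window_def using b(2) d by simp
qed

text \<open>The map sends a candidate dividing s^2 to its cofactor in [s/sqrt l, s], and any
  other candidate (then a multiple of l) to its quotient by l in [s/l, s/sqrt l]; the
  two ranges meet only where l d^2 = s^2, which is impossible for prime l.\<close>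

definition window_map :: "nat \<Rightarrow> nat \<Rightarrow> nat \<Rightarrow> nat" where
  "window_map l s a = (if a dvd s * s then s * s div a else a div l)"

lemma window_map_image:
  assumes "prime l" "0 < s"
  shows "window_map l s ` short_side_candidates (l * s) l (l * s * s) \<subseteq> sq_divisor_window l s"
  using cofactor_in_sq_divisor_window(1)[OF prime_gt_0_nat[OF assms(1)] assms(2)]
    quotient_in_sq_divisor_window(2)[OF assms(1)]
  by (auto simp: window_map_def)

lemma inj_on_window_map:
  assumes l: "prime l" and s: "0 < s"
  shows "inj_on (window_map l s) (short_side_candidates (l * s) l (l * s * s))"
    (is "inj_on ?\<phi> ?C")
proof (rule inj_onI)
  have up: "s * s \<le> l * ?\<phi> a * ?\<phi> a" if "a \<in> ?C" "a dvd s * s" for a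
    using cofactor_in_sq_divisor_window(2)[OF prime_gt_0_nat[OF l] s that]
    unfolding window_map_def by (simp add: that(2))
  have down: "l * ?\<phi> a * ?\<phi> a \<le> s * s" "a = l * ?\<phi> a" if "a \<in> ?C" "\<not> a dvd s * s" for a
    using quotient_in_sq_divisor_window(1,3)[OF l that] unfolding window_map_def
    by (simp_all add: that(2))
  have cross: False
    if "a \<in> ?C" "b \<in> ?C" "?\<phi> a = ?\<phi> b" "a dvd s * s" "\<not> b dvd s * s" for a b
    using up[OF that(1,4)] down(1)[OF that(2,5)] that(3) prime_mult_square_ne_square[OF l s]
    by (metis antisym)
  fix a b assume ab: "a \<in> ?C" "b \<in> ?C" "?\<phi> a = ?\<phi> b"
  show "a = b"
  proof (cases "a dvd s * s"; cases "b dvd s * s")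
    assume "a dvd s * s" "b dvd s * s"
    then have "a * (s * s div a) = b * (s * s div a)"
      using ab(3) dvd_mult_div_cancel[of a "s * s"] dvd_mult_div_cancel[of b "s * s"]
      unfolding window_map_def by simp
    moreover have "s * s div a \<noteq> 0"
      using \<open>a dvd s * s\<close> s by (simp add: dvd_div_eq_0_iff)
    ultimately show "a = b" by simp
  next
    assume "\<not> a dvd s * s" "\<not> b dvd s * s"
    then show "a = b" using down(2)[OF ab(1)] down(2)[OF ab(2)] ab(3) by simp
  next
    assume "a dvd s * s" "\<not> b dvd s * s"
    then show "a = b" using cross[OF ab] by blast
  next
    assume "\<not> a dvd s * s" "b dvd s * s"
    then show "a = b" using cross[OF ab(2,1) ab(3)[symmetric]] by blast
  qed
qed

lemma card_short_side_candidates_prime_le: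
  assumes l: "prime l" and n: "n = l * s" and s: "0 < s" and kA: "l * A = n * n"
  shows "card (short_side_candidates n l A) \<le> card (sq_divisor_window l s)"
proof -
  have "l * A = l * (l * s * s)" using kA n by (simp add: algebra_simps)
  then have A: "A = l * s * s" using prime_gt_0_nat[OF l] by simp
  show ?thesis unfolding n A
    by (rule card_inj_on_le[OF inj_on_window_map[OF l s] window_map_image[OF l s]
          finite_sq_divisor_window])
qed

lemma card_sq_divisor_window_prime:
  assumes "prime q"
  shows "card (sq_divisor_window l q) \<le> 2"
proof -
  have "sq_divisor_window l q \<subseteq> set [1, q]"
  proof
    fix d assume "d \<in> sq_divisor_window l q"
    then have d: "d dvd q ^ 2" "d \<le> q" by (auto simp: sq_divisor_window_def power2_eq_square)
    then obtain i where "i \<le> 2" "d = q ^ i" using divides_primepow_nat[OF assms] by blast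
    then have "d = 1 \<or> d = q \<or> d = q * q" by (auto simp: le_Suc_eq numeral_2_eq_2)
    moreover have "q < q * q" using prime_gt_1_nat[OF assms] by simp
    ultimately show "d \<in> set [1, q]" using d(2) by auto
  qed
  from card_le_length_if_subset_set[OF this] show ?thesis by simp
qed

lemma sq_divisor_window_two_primes:
  assumes q: "prime q" and r: "prime r" and "q \<le> r"
  shows "sq_divisor_window l (q * r) \<subseteq>
    {d. (d = 1 \<and> q * r \<le> l) \<or> (d = q \<and> r \<le> l) \<or> (d = r \<and> q \<le> l) \<or> d = q * r
      \<or> (d = q * q \<and> r \<le> l * q)}" (is "_ \<subseteq> ?S")
proof
  fix d assume "d \<in> sq_divisor_window l (q * r)"
  then have d: "d dvd q ^ 2 * r ^ 2" "q * r \<le> l * d" "d \<le> q * r"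
    by (auto simp: sq_divisor_window_def power2_eq_square algebra_simps)
  have q2: "2 \<le> q" "2 \<le> r" using q r prime_ge_2_nat by auto
  obtain d1 d2 where dd: "d = d1 * d2" "d1 dvd q ^ 2" "d2 dvd r ^ 2"
    using division_decomp[OF d(1)] by blast
  obtain i where i: "i \<le> 2" "d1 = q ^ i" using dd(2) divides_primepow_nat[OF q] by blast
  obtain j where j: "j \<le> 2" "d2 = r ^ j" using dd(3) divides_primepow_nat[OF r] by blast
  have "i = 0 \<or> i = 1 \<or> i = 2" "j = 0 \<or> j = 1 \<or> j = 2" using i(1) j(1) by auto
  then consider "d = 1" | "d = q" | "d = r" | "d = q * r" | "d = q * q" | "d = r * r"
    | "d = q * r * q" | "d = q * r * r" | "d = q * r * (q * r)"
    using dd i j by (auto simp: power2_eq_square algebra_simps)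
  then show "d \<in> ?S"
  proof cases
    case 2
    then have "q * r \<le> q * l" using d(2) by (simp add: mult.commute)
    then show ?thesis using 2 q2 by simp
  next
    case 3
    then have "r * q \<le> r * l" using d(2) by (simp add: mult.commute)
    then show ?thesis using 3 q2 by simp
  next
    case 5
    then have "q * r \<le> q * (l * q)" using d(2) by (simp add: algebra_simps)
    then show ?thesis using 5 q2 by simp
  next
    case 6
    then have "r * r \<le> r * q" using d(3) by (simp add: mult.commute)
    then show ?thesis using 6 q2 \<open>q \<le> r\<close> by simp
  next
    case 7
    then show ?thesis using d(3) q2 by simp
  next
    case 8
    then show ?thesis using d(3) q2 by simp
  next
    case 9
    then show ?thesis using d(3) q2 by (simp add: le_Suc_eq)
  qed (use d(2) in simp_all)
qed

lemma card_sq_divisor_window_two_primes: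
  assumes "prime q" "prime r" "q \<le> r"
  shows "card (sq_divisor_window l (q * r)) \<le> 5"
proof -
  have "sq_divisor_window l (q * r) \<subseteq> set [1, q, r, q * r, q * q]"
    using sq_divisor_window_two_primes[OF assms] by auto
  from card_le_length_if_subset_set[OF this] show ?thesis by simp
qed

lemma card_sq_divisor_window_5_two_primes:
  assumes "prime q" "prime r" "q \<le> r"
  shows "card (sq_divisor_window 5 (q * r)) \<le> 4"
proof (cases "q * r \<le> 5")
  case True
  have q2: "2 \<le> q" "2 \<le> r" using assms prime_ge_2_nat by auto
  have "2 * 3 \<le> q * r" if "3 \<le> r" using q2 that by (intro mult_le_mono) auto
  with True have "q = 2" "r = 2" using q2 assms(3) by linarith+
  then have "sq_divisor_window 5 (q * r) \<subseteq> set [1, 2, 4]"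
    using sq_divisor_window_two_primes[OF assms, of 5] by auto
  from card_le_length_if_subset_set[OF this] show ?thesis by simp
next
  case False
  then have "sq_divisor_window 5 (q * r) \<subseteq> set [q, r, q * r, q * q]"
    using sq_divisor_window_two_primes[OF assms, of 5] by auto
  from card_le_length_if_subset_set[OF this] show ?thesis by simp
qed

lemma card_sq_divisor_window_2_two_primes:
  assumes "prime q" "prime r" "q \<le> r"
  shows "card (sq_divisor_window 2 (q * r)) \<le> 3"
proof -
  have q2: "2 \<le> q" "2 \<le> r" using assms prime_ge_2_nat by auto
  have "2 * 2 \<le> q * r" using q2 by (intro mult_le_mono) auto
  show ?thesis
  proof (cases "r \<le> 2")
    case True
    then have "sq_divisor_window 2 (q * r) \<subseteq> set [2, 4]"
      using sq_divisor_window_two_primes[OF assms, of 2] q2 assms(3) by auto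
    from card_le_length_if_subset_set[OF this] show ?thesis by simp
  next
    case False
    then have "sq_divisor_window 2 (q * r) \<subseteq> set [r, q * r, q * q]"
      using sq_divisor_window_two_primes[OF assms, of 2] \<open>2 * 2 \<le> q * r\<close> by auto
    from card_le_length_if_subset_set[OF this] show ?thesis by simp
  qed
qed

lemma card_sq_divisor_window_3_two_primes:
  assumes q: "prime q" and r: "prime r" and "q \<le> r" and "3 \<le> card (sq_divisor_window 3 (q * r))"
  shows "q * r \<in> {4, 6, 9, 10, 15, 21}"
proof -
  have q2: "2 \<le> q" "2 \<le> r" using q r prime_ge_2_nat by auto
  have "2 * 2 \<le> q * r" using q2 by (intro mult_le_mono) auto
  show ?thesis
  proof (cases "r \<le> 3")
    case True
    then have "q \<in> {2, 3}" "r \<in> {2, 3}" using q2 \<open>q \<le> r\<close> by auto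
    then show ?thesis using \<open>q \<le> r\<close> by auto
  next
    case False
    have "q \<le> 3 \<and> r \<le> 3 * q"
    proof (rule ccontr)
      assume out: "\<not> (q \<le> 3 \<and> r \<le> 3 * q)"
      have "card (sq_divisor_window 3 (q * r)) \<le> 2"
      proof (cases "q \<le> 3")
        case True
        then have "sq_divisor_window 3 (q * r) \<subseteq> set [r, q * r]"
          using sq_divisor_window_two_primes[OF q r \<open>q \<le> r\<close>, of 3] \<open>2 * 2 \<le> q * r\<close> out
          by auto
        from card_le_length_if_subset_set[OF this] show ?thesis by simp
      next
        case False
        then have "sq_divisor_window 3 (q * r) \<subseteq> set [q * r, q * q]"
          using sq_divisor_window_two_primes[OF q r \<open>q \<le> r\<close>, of 3] \<open>2 * 2 \<le> q * r\<close> \<open>\<not> r \<le> 3\<close>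
          by auto
        from card_le_length_if_subset_set[OF this] show ?thesis by simp
      qed
      with assms(4) show False by simp
    qed
    then have "q \<in> {2, 3}" "r \<in> {4, 5, 6, 7, 8, 9}" using q2 False by auto
    moreover have "\<not> prime (4::nat)" "\<not> prime (6::nat)" "\<not> prime (8::nat)" "\<not> prime (9::nat)"
      by simp_all
    ultimately show ?thesis using r \<open>q \<le> 3 \<and> r \<le> 3 * q\<close> by auto
  qed
qed

lemma short_side_candidates_subset_by_search:
  assumes "n * n < k * m * m" "\<forall>a \<in> {..<m}. a dvd A \<and> n \<le> k * a \<longrightarrow> a \<in> S"
  shows "short_side_candidates n k A \<subseteq> S"
proof
  fix a assume a: "a \<in> short_side_candidates n k A"
  then have "k * (a * a) \<le> n * n" by (simp add: short_side_candidates_def mult.assoc)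
  also have "n * n < k * (m * m)" using assms(1) by (simp only: mult.assoc)
  finally have "a * a < m * m" by simp
  then have "a < m" using mult_self_le_mult_self_iff_nat not_le by blast
  then show "a \<in> S" using a assms(2) by (simp add: short_side_candidates_def)
qed

text \<open>The values n = 3s, s \<in> {4, 6, 9, 10, 15, 21}, left open by the window bound for k = 3.\<close>

lemma short_side_candidates_3_exceptional:
  "short_side_candidates 12 3 48 \<subseteq> {4, 6}"
  "short_side_candidates 18 3 108 \<subseteq> {6, 9}"
  "short_side_candidates 27 3 243 \<subseteq> {9}"
  "short_side_candidates 30 3 300 \<subseteq> {10, 12, 15}"
  "short_side_candidates 45 3 675 \<subseteq> {15, 25}"
  "short_side_candidates 63 3 1323 \<subseteq> {21, 27}"
  apply (rule short_side_candidates_subset_by_search[where m = 7], simp, simp add: lessThan_nat_numeral)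
  apply (rule short_side_candidates_subset_by_search[where m = 11], simp, simp add: lessThan_nat_numeral)
  apply (rule short_side_candidates_subset_by_search[where m = 16], simp, simp add: lessThan_nat_numeral)
  apply (rule short_side_candidates_subset_by_search[where m = 18], simp, simp add: lessThan_nat_numeral)
  apply (rule short_side_candidates_subset_by_search[where m = 26], simp, simp add: lessThan_nat_numeral)
  apply (rule short_side_candidates_subset_by_search[where m = 37], simp, simp add: lessThan_nat_numeral)
  done

lemma prime_dvd_two_primes_cofactor:
  assumes "prime (l::nat)" "prime p" "prime q" "l dvd p * q"
  obtains a where "prime a" "p * q = l * a"
proof -
  have "l dvd p \<or> l dvd q" using assms(1,4) by (simp add: prime_dvd_mult_iff)
  then have "l = p \<or> l = q" using assms(1-3) primes_dvd_imp_eq by blast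
  with assms(2,3) that show ?thesis by (auto simp: mult.commute)
qed

lemma prime_dvd_three_primes_cofactor:
  assumes "prime (l::nat)" "prime p" "prime q" "prime r" "l dvd p * q * r"
  obtains a b where "prime a" "prime b" "a \<le> b" "p * q * r = l * (a * b)"
proof -
  have "l dvd p \<or> l dvd q \<or> l dvd r" using assms(1,5) by (simp add: prime_dvd_mult_iff)
  then have "l = p \<or> l = q \<or> l = r" using assms(1-4) primes_dvd_imp_eq by blast
  then obtain a b where "prime a" "prime b" "p * q * r = l * (a * b)"
    using assms(2-4) by (auto simp: algebra_simps)
  with that show ?thesis by (cases "a \<le> b") (auto simp: mult.commute)
qed

lemma card_short_side_candidates_prime_two_primes:
  assumes "prime p" "prime q" "n = p * q" "prime k" "k * A = n * n"
  shows "card (short_side_candidates n k A) \<le> 2"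
proof -
  have "k dvd n * n" using assms(5) by (metis dvd_triv_left)
  then have "k dvd p * q" using assms(3,4) by (simp add: prime_dvd_mult_iff)
  then obtain s where s: "prime s" "p * q = k * s"
    using prime_dvd_two_primes_cofactor assms(1,2,4) by metis
  then have "card (short_side_candidates n k A) \<le> card (sq_divisor_window k s)"
    using assms by (intro card_short_side_candidates_prime_le) (auto simp: prime_gt_0_nat)
  with card_sq_divisor_window_prime[OF s(1), of k] show ?thesis by simp
qed

lemma card_short_side_candidates_prime_three_primes:
  assumes "prime p" "prime q" "prime r" "n = p * q * r" "prime k" "5 \<le> k" "k * A = n * n"
  shows "card (short_side_candidates n k A) < k"
proof -
  have "k dvd n * n" using assms(7) by (metis dvd_triv_left)
  then have "k dvd p * q * r" using assms(4,5) by (simp add: prime_dvd_mult_iff)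
  then obtain a b where ab: "prime a" "prime b" "a \<le> b" "p * q * r = k * (a * b)"
    using prime_dvd_three_primes_cofactor assms(1-3,5) by metis
  then have "card (short_side_candidates n k A) \<le> card (sq_divisor_window k (a * b))"
    using assms by (intro card_short_side_candidates_prime_le) (auto simp: prime_gt_0_nat)
  moreover have "card (sq_divisor_window k (a * b)) < k"
  proof (cases "k = 5")
    case True
    then show ?thesis using card_sq_divisor_window_5_two_primes[OF ab(1-3)] by simp
  next
    case False
    then have "7 \<le> k" using assms(5,6) by (cases "k = 6") auto
    then show ?thesis using card_sq_divisor_window_two_primes[OF ab(1-3), of k] by simp
  qed
  ultimately show ?thesis by simp
qed

lemma card_short_side_candidates_3_three_primes:
  assumes "prime p" "prime q" "prime r" "n = p * q * r" "3 * A = n * n"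
    and card: "3 \<le> card (short_side_candidates n 3 A)"
  shows "n = 30"
proof -
  have "3 dvd n * n" using assms(5) by (metis dvd_triv_left)
  then have "3 dvd p * q * r" using assms(4) by (simp add: prime_dvd_mult_iff)
  moreover have "prime (3::nat)" by simp
  ultimately obtain a b where ab: "prime a" "prime b" "a \<le> b" "p * q * r = 3 * (a * b)"
    using prime_dvd_three_primes_cofactor assms(1-3) by metis
  define s where "s = a * b"
  have n: "n = 3 * s" and A: "A = 3 * s * s" using assms(4,5) ab(4) unfolding s_def by simp_all
  have "card (short_side_candidates n 3 A) \<le> card (sq_divisor_window 3 s)"
    using ab n assms(5) unfolding s_def
    by (intro card_short_side_candidates_prime_le) (auto simp: prime_gt_0_nat)
  then have "s \<in> {4, 6, 9, 10, 15, 21}"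
    using card_sq_divisor_window_3_two_primes[OF ab(1-3)] card unfolding s_def by simp
  then consider "s = 10" | "short_side_candidates n 3 A \<subseteq> {4, 6}"
    | "short_side_candidates n 3 A \<subseteq> {6, 9}" | "short_side_candidates n 3 A \<subseteq> {9}"
    | "short_side_candidates n 3 A \<subseteq> {15, 25}" | "short_side_candidates n 3 A \<subseteq> {21, 27}"
    unfolding n A using short_side_candidates_3_exceptional by auto
  then show ?thesis
  proof cases
    case 1
    then show ?thesis using n by simp
  qed (insert card, drule card_mono[rotated], simp, simp)+
qed

lemma card_short_side_candidates_4_three_primes:
  assumes "prime p" "prime q" "prime r" "n = p * q * r" "4 * A = n * n"
  shows "card (short_side_candidates n 4 A) \<le> 3"
proof -
  have "2 dvd n * n" using assms(5) by (metis dvd_triv_left dvd_trans dvd_times_left_cancel_iff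
      mult_2 numeral_Bit0)
  then have "2 dvd p * q * r" using assms(4) by (simp add: prime_dvd_mult_iff)
  then obtain a b where ab: "prime a" "prime b" "a \<le> b" "p * q * r = 2 * (a * b)"
    using prime_dvd_three_primes_cofactor[OF two_is_prime_nat assms(1-3)] by metis
  define s where "s = a * b"
  have n: "n = 2 * s" and A: "A = s * s" using assms(4,5) ab(4) unfolding s_def by simp_all
  have "short_side_candidates n 4 A \<subseteq> sq_divisor_window 2 s"
  proof
    fix x assume "x \<in> short_side_candidates n 4 A"
    then have x: "x dvd s * s" "s \<le> 2 * x" "x * x \<le> s * s"
      unfolding short_side_candidates_def n A by (simp_all add: algebra_simps)
    then show "x \<in> sq_divisor_window 2 s"
      unfolding sq_divisor_window_def by (simp add: mult_self_le_mult_self_iff_nat)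
  qed
  then have "card (short_side_candidates n 4 A) \<le> card (sq_divisor_window 2 s)"
    by (intro card_mono finite_sq_divisor_window)
  with card_sq_divisor_window_2_two_primes[OF ab(1-3)] show ?thesis unfolding s_def by simp
qed

lemma enough_short_side_candidates:
  assumes n: "(\<exists>p q. prime p \<and> prime q \<and> n = p * q) \<or>
      (\<exists>p q r. prime p \<and> prime q \<and> prime r \<and> n = p * q * r)"
    and k: "2 \<le> k" and kA: "k * A = n * n" and enough: "k \<le> card (short_side_candidates n k A)"
  shows "k = 2 \<or> (n = 30 \<and> k = 3)"
proof (rule ccontr)
  assume other: "\<not> (k = 2 \<or> (n = 30 \<and> k = 3))"
  from n consider (two) p q where "prime p" "prime q" "n = p * q"
    | (three) p q r where "prime p" "prime q" "prime r" "n = p * q * r"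
    by blast
  then have "card (short_side_candidates n k A) < k"
  proof cases
    case two
    show ?thesis
    proof (cases "prime k")
      case True
      then show ?thesis
        using card_short_side_candidates_prime_two_primes[OF two True kA] k other by simp
    qed (rule card_short_side_candidates_composite_two_primes[OF two kA k])
  next
    case three
    have "k = 3 \<or> k = 4 \<or> 5 \<le> k" using k other by auto
    then consider "k = 3" | "k = 4" | "prime k" "5 \<le> k" | "\<not> prime k" "k \<noteq> 4"
      by (cases "prime k") auto
    then show ?thesis
    proof cases
      case 1
      then show ?thesis
        using card_short_side_candidates_3_three_primes[OF three] kA other by fastforce
    next
      case 2
      then show ?thesis using card_short_side_candidates_4_three_primes[OF three] kA by fastforce
    next
      case 3
      then show ?thesis by (rule card_short_side_candidates_prime_three_primes[OF three _ _ kA])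
    next
      case 4
      then show ?thesis by (rule card_short_side_candidates_composite_three_primes[OF three kA k(1)])
    qed
  qed
  with enough show False by simp
qed

lemma perfect_mondrian_card_le_candidates:
  assumes P: "perfect_mondrian n R" and "0 < n"
  shows "\<exists>A. card R * A = n * n \<and> card R \<le> card (short_side_candidates n (card R) A)"
proof -
  obtain A where total: "card R * A = n * n" and inj: "inj_on short_side R"
    and sub: "short_side ` R \<subseteq> short_side_candidates n (card R) A"
    by (rule perfect_mondrian_short_sides[OF P])
  have "0 < A" using total \<open>0 < n\<close> by (cases A) auto
  then show ?thesis
    using card_inj_on_le[OF inj sub finite_short_side_candidates] total by blast
qed

lemma perfect_mondrian_card_ne_2:
  assumes P: "perfect_mondrian n R"
  shows "card R \<noteq> 2"
proof
  assume "card R = 2"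
  then obtain r1 r2 where R: "R = {r1, r2}" and ne: "r1 \<noteq> r2" unfolding card_2_iff by blast
  have D: "dissection n {r1, r2}" and noncongr: "\<not> congruent_rect r1 r2"
    using P ne unfolding R perfect_mondrian_def mondrian_partition_def by simp_all
  have "area r1 = area r2"
    using P unfolding R perfect_mondrian_def by blast
  with dissection_two_equal_area_congruent[OF D ne] noncongr show False by blast
qed

lemma perfect_mondrian_30_card_ne_3:
  assumes P: "perfect_mondrian 30 R"
  shows "card R \<noteq> 3"
proof
  assume card: "card R = 3"
  obtain A where "card R * A = 30 * 30" and area_R: "\<forall>r\<in>R. area r = A"
    and inj: "inj_on short_side R" and sub: "short_side ` R \<subseteq> short_side_candidates 30 (card R) A"
    by (rule perfect_mondrian_short_sides[OF P])
  then have A: "A = 300" using card by simp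
  have "short_side ` R = {10, 12, 15}"
  proof (rule card_subset_eq)
    show "short_side ` R \<subseteq> {10, 12, 15}"
      using sub card A short_side_candidates_3_exceptional(4) by simp
    show "card (short_side ` R) = card {10, 12, 15::nat}"
      using card_image[OF inj] card by simp
  qed simp
  moreover have "dissection 30 R" using P by (simp add: perfect_mondrian_def mondrian_partition_def)
  ultimately show False
    using no_dissection_30_short_sides_10_12_15 area_R inj unfolding A by blast
qed

theorem mainTheorem10:
  fixes n :: nat
  assumes "(\<exists>p q. prime p \<and> prime q \<and> n = p * q) \<or>
         (\<exists>p q r. prime p \<and> prime q \<and> prime r \<and> n = p * q * r)"
  shows "\<not> (\<exists>R. perfect_mondrian n R)"
proof
  assume "\<exists>R. perfect_mondrian n R"
  then obtain R where P: "perfect_mondrian n R" by blast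
  have "0 < n" using assms prime_gt_0_nat by auto
  then obtain A where "card R * A = n * n" "card R \<le> card (short_side_candidates n (card R) A)"
    using perfect_mondrian_card_le_candidates[OF P] by blast
  moreover have "2 \<le> card R" using P by (simp add: perfect_mondrian_def mondrian_partition_def)
  ultimately have "card R = 2 \<or> (n = 30 \<and> card R = 3)"
    using enough_short_side_candidates[OF assms] by blast
  then show False using perfect_mondrian_card_ne_2[OF P] perfect_mondrian_30_card_ne_3 P by blast
qed

end
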